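(* Assume $\mathbb{E} Z<\infty$. Let $L_\infty=\inf_{n\in\mathbb{N}} L_n$. Then $L_\infty$ is finite almost surely. Consequently, the sequences $(R_n)_{n\ge1}$, $(L_n)_{n\ge1}$ and $(\Lambda_n)_{n\ge1}$ are almost surely bounded.
   Context: Let $Z,W,(Z_n)_{n\ge1},(W_n)_{n\ge1}$ be independent, identically distributed random variables taking values in $\mathbb{N}=\{1,2,3,\dots\}$. Define sets $T_n\subset\mathbb{Z}$ recursively by $T_n=\{n\}$ for $n\le 0$ and $T_n=\{n\}\cup T_{n-Z_n}\cup T_{n-W_n}$ for $n\ge1$ (the set of vertices reachable from $n$ in the directed graph on $\mathbb{Z}$ with edges $n\to n-Z_n$ and $n\to n-W_n$ for $n\ge1$). Let $\mathcal{L}_n=T_n\cap\{0,-1,-2,\dots\}$ (the leaves reached from $n$), $R_n=\max\mathcal{L}_n$, $L_n=\min\mathcal{L}_n$, and $\Lambda_n=|\mathcal{L}_n|$. *)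

theory Defs
  imports "HOL-Probability.Probability"
begin

text \<open>Given the realisations z n = Z_n, w n = W_n (n \<ge> 1),
  reach z w n m holds iff m is reachable from n in the directed graph on the integers
  with edges m \<rightarrow> m - z m and m \<rightarrow> m - w m for m \<ge> 1. Thus T_n = {m. reach z w n m}.\<close>

inductive reach :: "(nat \<Rightarrow> nat) \<Rightarrow> (nat \<Rightarrow> nat) \<Rightarrow> int \<Rightarrow> int \<Rightarrow> bool"
  for z w :: "nat \<Rightarrow> nat" and n :: int where
  refl: "reach z w n n"
| stepZ: "reach z w n m \<Longrightarrow> m \<ge> 1 \<Longrightarrow> reach z w n (m - int (z (nat m)))"
| stepW: "reach z w n m \<Longrightarrow> m \<ge> 1 \<Longrightarrow> reach z w n (m - int (w (nat m)))"

definition Tset :: "(nat \<Rightarrow> nat) \<Rightarrow> (nat \<Rightarrow> nat) \<Rightarrow> int \<Rightarrow> int set" where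
  "Tset z w n = {m. reach z w n m}"

definition leaves :: "(nat \<Rightarrow> nat) \<Rightarrow> (nat \<Rightarrow> nat) \<Rightarrow> int \<Rightarrow> int set" where
  "leaves z w n = Tset z w n \<inter> {..0}"

definition Rn :: "(nat \<Rightarrow> nat) \<Rightarrow> (nat \<Rightarrow> nat) \<Rightarrow> int \<Rightarrow> int" where
  "Rn z w n = Max (leaves z w n)"

definition Ln :: "(nat \<Rightarrow> nat) \<Rightarrow> (nat \<Rightarrow> nat) \<Rightarrow> int \<Rightarrow> int" where
  "Ln z w n = Min (leaves z w n)"

definition Lambdan :: "(nat \<Rightarrow> nat) \<Rightarrow> (nat \<Rightarrow> nat) \<Rightarrow> int \<Rightarrow> nat" where
  "Lambdan z w n = card (leaves z w n)"

definition family :: "('a \<Rightarrow> nat) \<Rightarrow> ('a \<Rightarrow> nat) \<Rightarrow> (nat \<Rightarrow> 'a \<Rightarrow> nat) \<Rightarrow> (nat \<Rightarrow> 'a \<Rightarrow> nat)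
    \<Rightarrow> bool \<times> nat \<Rightarrow> 'a \<Rightarrow> nat" where
  "family Z W Zs Ws i = (case i of (b, k) \<Rightarrow>
     if k = 0 then (if b then Z else W) else (if b then Zs k else Ws k))"

end

theory Submission
  imports Defs
begin

text \<open>Every vertex reached from \<open>n \<ge> 1\<close> other than \<open>n\<close> itself has the form \<open>m - Z\<^sub>m\<close> or
  \<open>m - W\<^sub>m\<close> with \<open>m \<ge> 1\<close>, so all leaves lie in \<open>[B, 0]\<close> as soon as \<open>B\<close> bounds these jumps
  from below. Such a \<open>B\<close> exists almost surely: \<open>\<Sum>\<^sub>n P(Z\<^sub>n > n) = \<Sum>\<^sub>n P(Z > n) \<le> E Z < \<infinity>\<close>, so by
  the first Borel--Cantelli lemma \<open>Z\<^sub>n \<le> n\<close> and \<open>W\<^sub>n \<le> n\<close> for all but finitely many \<open>n\<close>.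
  Then \<open>B \<le> L\<^sub>n \<le> R\<^sub>n \<le> 0\<close> and \<open>\<Lambda>\<^sub>n \<le> 1 - B\<close> for all \<open>n \<ge> 1\<close>.\<close>

lemma reach_ge:
  assumes "reach z w n x" "B \<le> n"
    and "\<forall>m\<ge>1. B \<le> int m - int (z m)" "\<forall>m\<ge>1. B \<le> int m - int (w m)"
  shows "B \<le> x"
  using assms(1)
proof induction
  case refl
  then show ?case using assms(2) .
next
  case (stepZ m)
  then show ?case using assms(3)[rule_format, of "nat m"] by simp
next
  case (stepW m)
  then show ?case using assms(4)[rule_format, of "nat m"] by simp
qed

lemma reach_nonpos_exists:
  assumes "\<forall>m\<ge>1. z m \<ge> 1" "reach z w n m"
  shows "\<exists>x\<le>0. reach z w n x"
  using assms(2)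
proof (induction "nat m" arbitrary: m rule: less_induct)
  case less
  show ?case
  proof (cases "m \<le> 0")
    case True
    with less.prems show ?thesis by blast
  next
    case False
    then have "z (nat m) \<ge> 1" using assms(1) by simp
    with False have "nat (m - int (z (nat m))) < nat m" by linarith
    moreover have "reach z w n (m - int (z (nat m)))"
      using less.prems False by (simp add: reach.stepZ)
    ultimately show ?thesis using less.hyps by blast
  qed
qed

lemma leaves_nonempty:
  assumes "\<forall>m\<ge>1. z m \<ge> 1"
  shows "leaves z w n \<noteq> {}"
  using reach_nonpos_exists[OF assms reach.refl] by (auto simp: leaves_def Tset_def)

lemma leaves_subset_atLeastAtMost:
  assumes "n \<ge> 1"
    and "\<forall>m\<ge>1. B \<le> int m - int (z m)" "\<forall>m\<ge>1. B \<le> int m - int (w m)"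
  shows "leaves z w n \<subseteq> {B..0}"
proof -
  have "B \<le> n" using assms(1) assms(2)[rule_format, of 1] by simp
  then show ?thesis
    using reach_ge[OF _ _ assms(2,3)] by (force simp: leaves_def Tset_def)
qed

lemma lower_bound_diff_if_eventually_le:
  assumes "eventually (\<lambda>m. f m \<le> m) sequentially"
  obtains B :: int where "\<forall>m. B \<le> int m - int (f m)"
proof -
  obtain N where N: "\<And>m. m \<ge> N \<Longrightarrow> f m \<le> m"
    using assms by (auto simp: eventually_sequentially)
  have "- int (\<Sum>k<N. f k) \<le> int m - int (f m)" for m
  proof (cases "m < N")
    case True
    then have "f m \<le> (\<Sum>k<N. f k)" by (intro member_le_sum) auto
    then show ?thesis by linarith
  next
    case False
    then show ?thesis using N[of m] by linarith
  qed
  then show thesis using that by blast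
qed

lemma leaves_uniformly_bounded:
  assumes "\<forall>m\<ge>1. z m \<ge> 1"
    and "eventually (\<lambda>m. z m \<le> m) sequentially" "eventually (\<lambda>m. w m \<le> m) sequentially"
  obtains B where "\<forall>n\<ge>1. leaves z w n \<noteq> {} \<and> leaves z w n \<subseteq> {B..0}"
proof -
  have "eventually (\<lambda>m. max (z m) (w m) \<le> m) sequentially"
    using assms(2,3) by eventually_elim simp
  then obtain B where B: "\<forall>m. B \<le> int m - int (max (z m) (w m))"
    by (rule lower_bound_diff_if_eventually_le)
  have "\<forall>m\<ge>1. B \<le> int m - int (z m)" "\<forall>m\<ge>1. B \<le> int m - int (w m)"
    using B by (metis diff_left_mono max.cobounded1 max.cobounded2 of_nat_mono order_trans)+
  then show thesis
    using that leaves_nonempty[OF assms(1)] leaves_subset_atLeastAtMost by blast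
qed

lemma
  assumes ne: "leaves z w n \<noteq> {}" and sub: "leaves z w n \<subseteq> {B..0}"
  shows Ln_ge: "B \<le> Ln z w n" and Ln_le_Rn: "Ln z w n \<le> Rn z w n" and Rn_nonpos: "Rn z w n \<le> 0"
    and Lambdan_le: "Lambdan z w n \<le> nat (1 - B)"
proof -
  have fin: "finite (leaves z w n)" using sub finite_subset by blast
  show "B \<le> Ln z w n" using Min_in[OF fin ne] sub unfolding Ln_def by auto
  show "Ln z w n \<le> Rn z w n" using Min_le[OF fin Max_in[OF fin ne]] unfolding Ln_def Rn_def .
  show "Rn z w n \<le> 0" using Max_in[OF fin ne] sub unfolding Rn_def by auto
  show "Lambdan z w n \<le> nat (1 - B)" using card_mono[OF _ sub] unfolding Lambdan_def by simp
qed

lemma INF_Ln_neq_minf: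
  assumes "\<forall>n\<ge>1. leaves z w n \<noteq> {} \<and> leaves z w n \<subseteq> {B..0}"
  shows "(INF n\<in>{1::int..}. ereal (real_of_int (Ln z w n))) \<noteq> -\<infinity>"
proof -
  have "ereal (real_of_int B) \<le> (INF n\<in>{1::int..}. ereal (real_of_int (Ln z w n)))"
    using Ln_ge assms by (intro INF_greatest) simp
  then show ?thesis by auto
qed

lemma Rn_Ln_Lambdan_bounded:
  assumes "\<forall>n\<ge>1. leaves z w n \<noteq> {} \<and> leaves z w n \<subseteq> {B..0}"
  shows "bdd_above ((\<lambda>n. Rn z w n) ` {1..}) \<and> bdd_below ((\<lambda>n. Rn z w n) ` {1..})
       \<and> bdd_above ((\<lambda>n. Ln z w n) ` {1..}) \<and> bdd_below ((\<lambda>n. Ln z w n) ` {1..})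
       \<and> bdd_above ((\<lambda>n. Lambdan z w n) ` {1..})"
proof -
  have "B \<le> Ln z w n \<and> Ln z w n \<le> Rn z w n \<and> Rn z w n \<le> 0 \<and> Lambdan z w n \<le> nat (1 - B)"
    if "n \<ge> 1" for n
    using assms that Ln_ge Ln_le_Rn Rn_nonpos Lambdan_le by blast
  then show ?thesis
    by (intro conjI bdd_aboveI2 bdd_belowI2) (auto intro: order_trans)
qed

lemma (in finite_measure) summable_measure_gt:
  fixes Y :: "'a \<Rightarrow> nat"
  assumes Y: "Y \<in> measurable M (count_space UNIV)"
    and finite_mean: "(\<integral>\<^sup>+ \<omega>. ennreal (real (Y \<omega>)) \<partial>M) < \<infinity>"
  shows "summable (\<lambda>k. measure M {\<omega>\<in>space M. k < Y \<omega>})"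
proof -
  have sets: "{\<omega>\<in>space M. k < Y \<omega>} \<in> sets M" for k
    using Y by measurable
  have "(\<integral>\<^sup>+ \<omega>. ennreal (real (Y \<omega>)) \<partial>M) = (\<integral>\<^sup>+ \<omega>. (\<Sum>k. indicator {\<omega>\<in>space M. k < Y \<omega>} \<omega>) \<partial>M)"
  proof (rule nn_integral_cong)
    fix \<omega> assume "\<omega> \<in> space M"
    then have "(\<Sum>k. indicator {\<omega>\<in>space M. k < Y \<omega>} \<omega> :: ennreal) = (\<Sum>k<Y \<omega>. 1)"
      by (subst suminf_finite[of "{..<Y \<omega>}"]) (auto simp: indicator_def)
    then show "ennreal (real (Y \<omega>)) = (\<Sum>k. indicator {\<omega>\<in>space M. k < Y \<omega>} \<omega>)"
      by (simp add: ennreal_of_nat_eq_real_of_nat)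
  qed
  also have "\<dots> = (\<Sum>k. ennreal (measure M {\<omega>\<in>space M. k < Y \<omega>}))"
    using sets by (subst nn_integral_suminf) (auto simp: emeasure_eq_measure)
  finally have "(\<Sum>k. ennreal (measure M {\<omega>\<in>space M. k < Y \<omega>})) \<noteq> \<top>"
    using finite_mean by simp
  then show ?thesis by (intro summable_suminf_not_top) auto
qed

text \<open>Only the marginal laws enter (first Borel--Cantelli lemma), so the independence
  hypothesis of the theorem is needed for measurability alone.\<close>

lemma (in finite_measure) AE_eventually_le_index:
  fixes X :: "nat \<Rightarrow> 'a \<Rightarrow> nat" and Y :: "'a \<Rightarrow> nat"
  assumes X: "\<And>n. X n \<in> measurable M (count_space UNIV)"
    and Y: "Y \<in> measurable M (count_space UNIV)"
    and distr_eq: "\<And>n. distr M (count_space UNIV) (X n) = distr M (count_space UNIV) Y"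
    and finite_mean: "(\<integral>\<^sup>+ \<omega>. ennreal (real (Y \<omega>)) \<partial>M) < \<infinity>"
  shows "AE \<omega> in M. eventually (\<lambda>n. X n \<omega> \<le> n) sequentially"
proof -
  define A where "A n = {\<omega>\<in>space M. n < X n \<omega>}" for n
  have A_sets: "A n \<in> sets M" for n
    unfolding A_def using X by measurable
  have "measure M (A n) = measure M {\<omega>\<in>space M. n < Y \<omega>}" for n
  proof -
    have "measure M (A n) = measure (distr M (count_space UNIV) (X n)) {n<..}"
      using measure_distr[OF X, of "{n<..}"] by (simp add: A_def vimage_def Int_def conj_commute)
    also have "\<dots> = measure M {\<omega>\<in>space M. n < Y \<omega>}"
      using measure_distr[OF Y, of "{n<..}"] by (simp add: distr_eq vimage_def Int_def conj_commute)
    finally show ?thesis .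
  qed
  then have "summable (\<lambda>n. measure M (A n))"
    using summable_measure_gt[OF Y finite_mean] by simp
  then have "AE \<omega> in M. eventually (\<lambda>n. \<omega> \<in> space M - A n) sequentially"
    using A_sets by (intro borel_cantelli_AE1) (auto simp: emeasure_eq_measure)
  then show ?thesis
    by (rule eventually_mono) (auto simp: A_def elim: eventually_mono)
qed

theorem theorem1:
  fixes M :: "'a measure" and Z W :: "'a \<Rightarrow> nat" and Zs Ws :: "nat \<Rightarrow> 'a \<Rightarrow> nat"
  assumes "prob_space M"
    and indep: "prob_space.indep_vars M (\<lambda>_. count_space UNIV) (family Z W Zs Ws) UNIV"
    and ident: "\<And>i. distr M (count_space UNIV) (family Z W Zs Ws i) = distr M (count_space UNIV) Z"
    and pos: "\<And>i \<omega>. \<omega> \<in> space M \<Longrightarrow> family Z W Zs Ws i \<omega> \<ge> 1"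
    and finexp: "(\<integral>\<^sup>+ \<omega>. ennreal (real (Z \<omega>)) \<partial>M) < \<infinity>"
  shows "(AE \<omega> in M. (INF n\<in>{1::int..}. ereal (real_of_int (Ln (\<lambda>k. Zs k \<omega>) (\<lambda>k. Ws k \<omega>) n))) \<noteq> -\<infinity>)
       \<and> (AE \<omega> in M. bdd_above ((\<lambda>n. Rn (\<lambda>k. Zs k \<omega>) (\<lambda>k. Ws k \<omega>) n) ` {1..})
                   \<and> bdd_below ((\<lambda>n. Rn (\<lambda>k. Zs k \<omega>) (\<lambda>k. Ws k \<omega>) n) ` {1..})
                   \<and> bdd_above ((\<lambda>n. Ln (\<lambda>k. Zs k \<omega>) (\<lambda>k. Ws k \<omega>) n) ` {1..})
                   \<and> bdd_below ((\<lambda>n. Ln (\<lambda>k. Zs k \<omega>) (\<lambda>k. Ws k \<omega>) n) ` {1..})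
                   \<and> bdd_above ((\<lambda>n. Lambdan (\<lambda>k. Zs k \<omega>) (\<lambda>k. Ws k \<omega>) n) ` {1..}))"
proof -
  interpret prob_space M by fact
  let ?X = "family Z W Zs Ws"
  have X: "?X i \<in> measurable M (count_space UNIV)" for i
    using indep unfolding indep_vars_def by (cases i) auto
  have Z: "Z \<in> measurable M (count_space UNIV)"
    using X[of "(True, 0)"] by (simp add: family_def)
  have X_le: "AE \<omega> in M. eventually (\<lambda>n. ?X (b, n) \<omega> \<le> n) sequentially" for b
    using X Z ident finexp by (rule AE_eventually_le_index)
  have "AE \<omega> in M. \<exists>B. \<forall>n\<ge>1. leaves (\<lambda>k. Zs k \<omega>) (\<lambda>k. Ws k \<omega>) n \<noteq> {}
                              \<and> leaves (\<lambda>k. Zs k \<omega>) (\<lambda>k. Ws k \<omega>) n \<subseteq> {B..0}"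
    using X_le[of True] X_le[of False] AE_space
  proof eventually_elim
    case (elim \<omega>)
    have "\<forall>m\<ge>1. Zs m \<omega> \<ge> 1"
    proof (intro allI impI)
      fix m :: nat assume "m \<ge> 1"
      then show "Zs m \<omega> \<ge> 1" using pos[OF elim(3), of "(True, m)"] by (simp add: family_def)
    qed
    moreover have "eventually (\<lambda>n. Zs n \<omega> \<le> n) sequentially"
      using elim(1) eventually_ge_at_top[of "1::nat"] by eventually_elim (simp add: family_def)
    moreover have "eventually (\<lambda>n. Ws n \<omega> \<le> n) sequentially"
      using elim(2) eventually_ge_at_top[of "1::nat"] by eventually_elim (simp add: family_def)
    ultimately show ?case
      by (rule leaves_uniformly_bounded) blast
  qed
  then show ?thesis
    by (auto elim!: eventually_mono dest: INF_Ln_neq_minf Rn_Ln_Lambdan_bounded)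
qed

end
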